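(* Let $m\ge 2$ and let $C_1,\dots,C_m\subset\mathbb{R}^n$ be nonempty, closed, convex sets that are pairwise disjoint ($C_i\cap C_j=\varnothing$ for $i\neq j$). Let $C=C_1\times\cdots\times C_m$ and $D(a)=\sum_{i=1}^m\|a_i-a_{i+1}\|$ with $a_{m+1}=a_1$. Then $a^*=(a_1^*,\dots,a_m^* )\in C$ is an optimal solution of $\min_{a\in C}D(a)$ if and only if there exist vectors $n_i\in N_{C_i}(a_i^* )$, $i=1,\dots,m$, such that for each $i=1,\dots,m$ $$\frac{a_i^*-a_{i-1}^*}{\|a_i^*-a_{i-1}^*\|}+\frac{a_i^*-a_{i+1}^*}{\|a_i^*-a_{i+1}^*\|}+n_i=0,$$ with indices cyclic ($a_0^*=a_m^*$, $a_{m+1}^*=a_1^*$). Moreover, in this case $n_1+n_2+\cdots+n_m=0$.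
   Context: For a convex set $K\subset\mathbb{R}^n$ and $x\in K$, the normal cone is $N_K(x)=\{v\in\mathbb{R}^n:\langle v,y-x\rangle\le 0\ \forall y\in K\}$. *)

theory Defs
  imports "HOL-Analysis.Analysis"
begin

definition normal_cone :: "'a::real_inner set \<Rightarrow> 'a \<Rightarrow> 'a set" where
  "normal_cone K x = {v. \<forall>y\<in>K. inner v (y - x) \<le> 0}"

text \<open>Indices 1..m of the paper are represented as 0..<m; cyclic successor/predecessor.\<close>
definition cyc_succ :: "nat \<Rightarrow> nat \<Rightarrow> nat" where
  "cyc_succ m i = Suc i mod m"

definition cyc_pred :: "nat \<Rightarrow> nat \<Rightarrow> nat" where
  "cyc_pred m i = (i + m - 1) mod m"

definition cyc_D :: "nat \<Rightarrow> (nat \<Rightarrow> 'a::real_normed_vector) \<Rightarrow> real" where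
  "cyc_D m a = (\<Sum>i<m. norm (a i - a (cyc_succ m i)))"

end

theory Submission
  imports Defs
begin

(*
  Write e_k = sgn (a_k - a_{k+1}) for the unit edge directions; the stationarity condition says
  exactly n_i = e_{i-1} - e_i, so the n_i telescope cyclically to 0.  Sufficiency: since
  norm x + sgn x \<bullet> (y - x) \<le> norm y, the vectors e_i - e_{i-1} = -n_i form a subgradient of D at a,
  hence D b \<ge> D a - \<Sum> n_i \<bullet> (b_i - a_i) \<ge> D a.  Necessity: moving a_i alone inside C_i changes D by
  norm (x - a_{i+1}) + norm (x - a_{i-1}), which is differentiable at a_i because disjointness keeps
  a_i away from its neighbours; its derivative at the minimiser a_i is nonnegative along every
  direction into the convex set C_i, i.e. n_i = e_{i-1} - e_i lies in the normal cone.
*)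

lemma cyc_succ_eq: "i < m \<Longrightarrow> cyc_succ m i = (if Suc i = m then 0 else Suc i)"
  unfolding cyc_succ_def by auto

lemma cyc_pred_eq: "i < m \<Longrightarrow> cyc_pred m i = (if i = 0 then m - 1 else i - 1)"
  unfolding cyc_pred_def
  by (cases i) (auto simp: add.commute[of _ m])

lemma cyc_succ_less: "i < m \<Longrightarrow> cyc_succ m i < m"
  by (simp add: cyc_succ_def)

lemma cyc_pred_less: "i < m \<Longrightarrow> cyc_pred m i < m"
  by (simp add: cyc_pred_def)

lemma cyc_succ_pred: "i < m \<Longrightarrow> cyc_succ m (cyc_pred m i) = i"
  by (auto simp: cyc_succ_eq cyc_pred_eq cyc_pred_less)

lemma cyc_pred_succ: "i < m \<Longrightarrow> cyc_pred m (cyc_succ m i) = i"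
  by (auto simp: cyc_succ_eq cyc_pred_eq cyc_succ_less)

lemma cyc_succ_neq: "2 \<le> m \<Longrightarrow> i < m \<Longrightarrow> cyc_succ m i \<noteq> i"
  by (auto simp: cyc_succ_eq)

lemma cyc_pred_neq: "2 \<le> m \<Longrightarrow> i < m \<Longrightarrow> cyc_pred m i \<noteq> i"
  by (auto simp: cyc_pred_eq)

lemma sum_cyc_pred: "(\<Sum>i<m. f (cyc_pred m i)) = (\<Sum>i<m. f i)"
  by (rule sum.reindex_bij_witness[where i = "cyc_succ m" and j = "cyc_pred m"])
     (auto simp: cyc_succ_less cyc_pred_less cyc_succ_pred cyc_pred_succ)

lemma sum_cyc_pred_diff:
  fixes f :: "nat \<Rightarrow> 'a::ab_group_add"
  shows "(\<Sum>i<m. f (cyc_pred m i) - f i) = 0"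
  by (simp add: sum_subtractf sum_cyc_pred)

definition cyc_edge_dir :: "nat \<Rightarrow> (nat \<Rightarrow> 'a::real_normed_vector) \<Rightarrow> nat \<Rightarrow> 'a" where
  "cyc_edge_dir m a k = sgn (a k - a (cyc_succ m k))"

lemma cyc_edge_dir_pred:
  "i < m \<Longrightarrow> cyc_edge_dir m a (cyc_pred m i) = - sgn (a i - a (cyc_pred m i))"
  by (simp add: cyc_edge_dir_def cyc_succ_pred flip: sgn_minus)

lemma cyc_stationarity_iff:
  "(\<forall>i<m. (a i - a (cyc_pred m i)) /\<^sub>R norm (a i - a (cyc_pred m i))
            + (a i - a (cyc_succ m i)) /\<^sub>R norm (a i - a (cyc_succ m i)) + v i = 0)
   \<longleftrightarrow> (\<forall>i<m. v i = cyc_edge_dir m a (cyc_pred m i) - cyc_edge_dir m a i)"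
  by (simp add: cyc_edge_dir_pred add_eq_0_iff flip: sgn_div_norm) (simp add: cyc_edge_dir_def)

lemma norm_sgn_subgradient:
  fixes x y :: "'a::real_inner"
  shows "norm x + sgn x \<bullet> (y - x) \<le> norm y"
proof -
  have "sgn x \<bullet> x = norm x"
    by (cases "x = 0") (simp_all add: sgn_div_norm power2_eq_square flip: power2_norm_eq_inner)
  moreover have "sgn x \<bullet> y \<le> norm (sgn x) * norm y"
    by (rule norm_cauchy_schwarz)
  moreover have "norm (sgn x) * norm y \<le> norm y"
    by (simp add: norm_sgn)
  ultimately show ?thesis
    by (simp add: inner_diff_right)
qed

lemma cyc_D_subgradient:
  fixes a b :: "nat \<Rightarrow> 'a::real_inner"
  shows "cyc_D m a + (\<Sum>k<m. (cyc_edge_dir m a k - cyc_edge_dir m a (cyc_pred m k)) \<bullet> (b k - a k))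
           \<le> cyc_D m b"
proof -
  let ?e = "cyc_edge_dir m a" and ?s = "cyc_succ m" and ?d = "\<lambda>k. b k - a k"
  have "(\<Sum>k<m. ?e (cyc_pred m k) \<bullet> ?d k) = (\<Sum>k<m. ?e (cyc_pred m k) \<bullet> ?d (?s (cyc_pred m k)))"
    by (rule sum.cong) (simp_all add: cyc_succ_pred)
  also have "\<dots> = (\<Sum>k<m. ?e k \<bullet> ?d (?s k))"
    by (rule sum_cyc_pred)
  finally have "cyc_D m a + (\<Sum>k<m. (?e k - ?e (cyc_pred m k)) \<bullet> ?d k)
      = (\<Sum>k<m. norm (a k - a (?s k)) + ?e k \<bullet> ((b k - b (?s k)) - (a k - a (?s k))))"
    by (simp add: cyc_D_def sum.distrib sum_subtractf algebra_simps)
  also have "\<dots> \<le> cyc_D m b"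
    unfolding cyc_D_def cyc_edge_dir_def by (intro sum_mono norm_sgn_subgradient)
  finally show ?thesis .
qed

lemma cyc_D_min_if_stationary:
  fixes a :: "nat \<Rightarrow> 'a::real_inner"
  assumes normal: "\<And>i. i < m \<Longrightarrow>
      cyc_edge_dir m a (cyc_pred m i) - cyc_edge_dir m a i \<in> normal_cone (C i) (a i)"
    and b: "\<And>i. i < m \<Longrightarrow> b i \<in> C i"
  shows "cyc_D m a \<le> cyc_D m b"
proof -
  have "0 \<le> (\<Sum>k<m. (cyc_edge_dir m a k - cyc_edge_dir m a (cyc_pred m k)) \<bullet> (b k - a k))"
  proof (intro sum_nonneg)
    fix k assume "k \<in> {..<m}"
    then have "(cyc_edge_dir m a (cyc_pred m k) - cyc_edge_dir m a k) \<bullet> (b k - a k) \<le> 0"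
      using normal b unfolding normal_cone_def by blast
    then show "0 \<le> (cyc_edge_dir m a k - cyc_edge_dir m a (cyc_pred m k)) \<bullet> (b k - a k)"
      by (simp add: inner_diff_left)
  qed
  then show ?thesis
    using cyc_D_subgradient[of m a b] by linarith
qed

lemma has_derivative_min_on_convex:
  fixes f :: "'a::real_normed_vector \<Rightarrow> real"
  assumes deriv: "(f has_derivative f') (at x)"
    and "convex K" "x \<in> K" "y \<in> K"
    and min: "\<And>z. z \<in> K \<Longrightarrow> f x \<le> f z"
  shows "0 \<le> f' (y - x)"
proof (rule ccontr)
  assume neg: "\<not> 0 \<le> f' (y - x)"
  interpret f': bounded_linear f'
    using deriv by (rule has_derivative_bounded_linear)
  define \<phi> where "\<phi> t = f (x + t *\<^sub>R (y - x))" for t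
  have "((\<lambda>t. x + t *\<^sub>R (y - x)) has_derivative (\<lambda>t. t *\<^sub>R (y - x))) (at 0)"
    by (intro derivative_eq_intros) auto
  then have "(\<phi> has_derivative (\<lambda>t. f' (t *\<^sub>R (y - x)))) (at 0)"
    unfolding \<phi>_def by (rule has_derivative_compose) (simp add: deriv)
  then have "DERIV \<phi> 0 :> f' (y - x)"
    unfolding has_field_derivative_def by (simp add: f'.scaleR mult_commute_abs)
  then have "\<exists>d>0. \<forall>t>0. t < d \<longrightarrow> \<phi> (0 + t) < \<phi> 0"
    using neg by (intro DERIV_neg_dec_right) auto
  then obtain d where "0 < d" and dec: "\<And>t. 0 < t \<Longrightarrow> t < d \<Longrightarrow> \<phi> t < \<phi> 0"
    by auto
  define t where "t = min (d / 2) 1"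
  have "0 < t" "t < d" "t \<le> 1"
    using \<open>0 < d\<close> by (auto simp: t_def)
  have "x + t *\<^sub>R (y - x) = (1 - t) *\<^sub>R x + t *\<^sub>R y"
    by (simp add: algebra_simps)
  also have "\<dots> \<in> K"
    using \<open>convex K\<close> \<open>x \<in> K\<close> \<open>y \<in> K\<close> \<open>0 < t\<close> \<open>t \<le> 1\<close> by (simp add: convex_def)
  finally have "\<phi> 0 \<le> \<phi> t"
    unfolding \<phi>_def by (simp add: min)
  then show False
    using dec[OF \<open>0 < t\<close> \<open>t < d\<close>] by simp
qed

lemma cyc_D_fun_upd:
  fixes a :: "nat \<Rightarrow> 'a::real_normed_vector"
  assumes "2 \<le> m" "i < m"
  shows "cyc_D m (a(i := x)) = cyc_D m a
           + (norm (x - a (cyc_succ m i)) - norm (a i - a (cyc_succ m i)))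
           + (norm (x - a (cyc_pred m i)) - norm (a i - a (cyc_pred m i)))"
proof -
  let ?s = "cyc_succ m" and ?p = "cyc_pred m"
  let ?R = "{..<m} - {i, ?p i}"
  have pred_ne: "?p i \<noteq> i" and succ_ne: "?s i \<noteq> i"
    using assms by (simp_all add: cyc_pred_neq cyc_succ_neq)
  have split: "cyc_D m c = norm (c i - c (?s i)) + norm (c (?p i) - c i)
                 + (\<Sum>k\<in>?R. norm (c k - c (?s k)))" for c :: "nat \<Rightarrow> 'a"
  proof -
    have "cyc_D m c = norm (c i - c (?s i)) + (\<Sum>k\<in>{..<m} - {i}. norm (c k - c (?s k)))"
      unfolding cyc_D_def using assms(2) by (simp add: sum.remove)
    also have "(\<Sum>k\<in>{..<m} - {i}. norm (c k - c (?s k)))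
        = norm (c (?p i) - c i) + (\<Sum>k\<in>?R. norm (c k - c (?s k)))"
      using assms(2) pred_ne
      by (simp add: sum.remove[of _ "?p i"] cyc_pred_less cyc_succ_pred Diff_insert2[symmetric])
    finally show ?thesis by simp
  qed
  have "(\<Sum>k\<in>?R. norm ((a(i := x)) k - (a(i := x)) (?s k))) = (\<Sum>k\<in>?R. norm (a k - a (?s k)))"
  proof (rule sum.cong)
    fix k assume "k \<in> ?R"
    moreover have "?s k \<noteq> i" if "k \<in> ?R"
      using that cyc_pred_succ[of k m] by auto
    ultimately show "norm ((a(i := x)) k - (a(i := x)) (?s k)) = norm (a k - a (?s k))"
      by simp
  qed simp
  then show ?thesis
    using split[of "a(i := x)"] split[of a] pred_ne succ_ne by (simp add: norm_minus_commute)
qed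

lemma cyc_neighbours_distinct:
  assumes "2 \<le> m" "i < m"
    and disjoint: "\<And>i j. i < m \<Longrightarrow> j < m \<Longrightarrow> i \<noteq> j \<Longrightarrow> C i \<inter> C j = {}"
    and a: "\<And>k. k < m \<Longrightarrow> a k \<in> C k"
  shows "a i \<noteq> a (cyc_succ m i)" "a i \<noteq> a (cyc_pred m i)"
proof -
  have "a i \<noteq> a j" if "j < m" "j \<noteq> i" for j
    using disjoint[OF \<open>i < m\<close> that(1)] a \<open>i < m\<close> that by (metis disjoint_iff)
  then show "a i \<noteq> a (cyc_succ m i)" "a i \<noteq> a (cyc_pred m i)"
    using assms(1,2) by (simp_all add: cyc_succ_less cyc_pred_less cyc_succ_neq cyc_pred_neq)
qed

lemma has_derivative_norm_diff:
  fixes x c :: "'a::real_inner"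
  assumes "x \<noteq> c"
  shows "((\<lambda>y. norm (y - c)) has_derivative (\<lambda>h. h \<bullet> sgn (x - c))) (at x)"
  using has_derivative_compose[OF has_derivative_diff[OF has_derivative_ident has_derivative_const]
      has_derivative_norm] assms
  by simp

lemma cyc_D_min_imp_stationary:
  fixes a :: "nat \<Rightarrow> 'a::real_inner"
  assumes "2 \<le> m" "i < m" "convex (C i)"
    and a: "\<And>k. k < m \<Longrightarrow> a k \<in> C k"
    and succ_ne: "a i \<noteq> a (cyc_succ m i)" and pred_ne: "a i \<noteq> a (cyc_pred m i)"
    and min: "\<forall>b. (\<forall>k<m. b k \<in> C k) \<longrightarrow> cyc_D m a \<le> cyc_D m b"
  shows "cyc_edge_dir m a (cyc_pred m i) - cyc_edge_dir m a i \<in> normal_cone (C i) (a i)"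
proof -
  define f where "f x = norm (x - a (cyc_succ m i)) + norm (x - a (cyc_pred m i))" for x
  have "(f has_derivative (\<lambda>h. h \<bullet> sgn (a i - a (cyc_succ m i)) + h \<bullet> sgn (a i - a (cyc_pred m i))))
          (at (a i))"
    unfolding f_def using succ_ne pred_ne by (intro has_derivative_add has_derivative_norm_diff)
  then have deriv: "(f has_derivative (\<lambda>h. h \<bullet> (cyc_edge_dir m a i - cyc_edge_dir m a (cyc_pred m i))))
          (at (a i))"
    unfolding cyc_edge_dir_pred[OF \<open>i < m\<close>] cyc_edge_dir_def[of m a i] by (simp add: inner_add_right)
  have f_min: "f (a i) \<le> f z" if "z \<in> C i" for z
  proof -
    have "\<forall>k<m. (a(i := z)) k \<in> C k"
      using a that by simp
    then have "cyc_D m a \<le> cyc_D m (a(i := z))"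
      using min by blast
    then show ?thesis
      using cyc_D_fun_upd[OF \<open>2 \<le> m\<close> \<open>i < m\<close>, of a z] by (simp add: f_def)
  qed
  show ?thesis
    unfolding normal_cone_def
  proof (intro CollectI ballI)
    fix y assume "y \<in> C i"
    from has_derivative_min_on_convex[OF deriv \<open>convex (C i)\<close> a[OF \<open>i < m\<close>] this f_min]
    show "(cyc_edge_dir m a (cyc_pred m i) - cyc_edge_dir m a i) \<bullet> (y - a i) \<le> 0"
      by (simp add: inner_commute inner_diff_left inner_diff_right)
  qed
qed

theorem mainTheorem5:
  fixes m :: nat and C :: "nat \<Rightarrow> 'a::euclidean_space set" and a :: "nat \<Rightarrow> 'a"
  assumes "m \<ge> 2"
    and "\<And>i. i < m \<Longrightarrow> C i \<noteq> {}"
    and "\<And>i. i < m \<Longrightarrow> closed (C i)"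
    and "\<And>i. i < m \<Longrightarrow> convex (C i)"
    and "\<And>i j. i < m \<Longrightarrow> j < m \<Longrightarrow> i \<noteq> j \<Longrightarrow> C i \<inter> C j = {}"
    and "\<And>i. i < m \<Longrightarrow> a i \<in> C i"
  shows "((\<forall>b. (\<forall>i<m. b i \<in> C i) \<longrightarrow> cyc_D m a \<le> cyc_D m b) \<longleftrightarrow>
          (\<exists>nv :: nat \<Rightarrow> 'a. (\<forall>i<m. nv i \<in> normal_cone (C i) (a i)) \<and>
             (\<forall>i<m. (a i - a (cyc_pred m i)) /\<^sub>R norm (a i - a (cyc_pred m i))
                    + (a i - a (cyc_succ m i)) /\<^sub>R norm (a i - a (cyc_succ m i)) + nv i = 0)))
       \<and> (\<forall>nv :: nat \<Rightarrow> 'a. ((\<forall>i<m. nv i \<in> normal_cone (C i) (a i)) \<and>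
             (\<forall>i<m. (a i - a (cyc_pred m i)) /\<^sub>R norm (a i - a (cyc_pred m i))
                    + (a i - a (cyc_succ m i)) /\<^sub>R norm (a i - a (cyc_succ m i)) + nv i = 0))
            \<longrightarrow> (\<Sum>i<m. nv i) = 0)"
proof -
  let ?e = "cyc_edge_dir m a"
  show ?thesis
    unfolding cyc_stationarity_iff
  proof (intro conjI iffI allI impI)
    assume "\<forall>b. (\<forall>i<m. b i \<in> C i) \<longrightarrow> cyc_D m a \<le> cyc_D m b"
    then have "?e (cyc_pred m i) - ?e i \<in> normal_cone (C i) (a i)" if "i < m" for i
      using cyc_D_min_imp_stationary[of m i C a] cyc_neighbours_distinct[of m i C a] assms(1,4-6) that
      by blast
    then show "\<exists>nv. (\<forall>i<m. nv i \<in> normal_cone (C i) (a i)) \<and> (\<forall>i<m. nv i = ?e (cyc_pred m i) - ?e i)"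
      by (intro exI[of _ "\<lambda>i. ?e (cyc_pred m i) - ?e i"]) simp
  next
    fix b
    assume "\<exists>nv. (\<forall>i<m. nv i \<in> normal_cone (C i) (a i)) \<and> (\<forall>i<m. nv i = ?e (cyc_pred m i) - ?e i)"
      and "\<forall>i<m. b i \<in> C i"
    then show "cyc_D m a \<le> cyc_D m b"
      using cyc_D_min_if_stationary[of m a C b] by auto
  next
    fix nv :: "nat \<Rightarrow> 'a"
    assume "(\<forall>i<m. nv i \<in> normal_cone (C i) (a i)) \<and> (\<forall>i<m. nv i = ?e (cyc_pred m i) - ?e i)"
    then show "(\<Sum>i<m. nv i) = 0"
      using sum_cyc_pred_diff[of ?e m] by simp
  qed
qed

end
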